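(* Let $n\ge1$, $L,G>0$ and $\eta>0$ with $\eta nL\le \frac12$. Let $a_1,\dots,a_n\in[0,L]$ and $b_1,\dots,b_n\in[-G,G]$ with $\sum_{i=1}^nb_i=0$. For a permutation $\sigma$ of $\{1,\dots,n\}$ define \[ X_\sigma=\sum_{j=1}^n\left(\prod_{i=j+1}^n(1-\eta a_{\sigma(i)})\right)b_{\sigma(j)} \] (an empty product equals $1$). If $\sigma$ is a uniformly random permutation, then \[ \big|\mathbb{E}_\sigma[X_\sigma]\big|\;\le\;2\eta nGL. \] *)

theory Defs
  imports "HOL-Analysis.Analysis" "HOL-Combinatorics.Permutations"
begin

definition X_perm :: "nat \<Rightarrow> real \<Rightarrow> (nat \<Rightarrow> real) \<Rightarrow> (nat \<Rightarrow> real) \<Rightarrow> (nat \<Rightarrow> nat) \<Rightarrow> real" where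
  "X_perm n \<eta> a b \<sigma> =
     (\<Sum>j=1..n. (\<Prod>i=j+1..n. (1 - \<eta> * a (\<sigma> i))) * b (\<sigma> j))"

definition expect_perm :: "nat \<Rightarrow> ((nat \<Rightarrow> nat) \<Rightarrow> real) \<Rightarrow> real" where
  "expect_perm n F = (\<Sum>\<sigma>\<in>{\<sigma>. \<sigma> permutes {1..n}}. F \<sigma>) / real (card {\<sigma>. \<sigma> permutes {1..n}})"

end

theory Submission
  imports Defs
begin

text \<open>
  Writing \<open>c i = 1 - \<eta> a i\<close> and summing over all permutations, the total of \<open>X\<^sub>\<sigma>\<close> is
  \<open>\<Sum>q. b q * W q\<close>, where \<open>W q\<close> collects the products of the factors \<open>c\<close> standing after the
  position of \<open>q\<close>. Composing with the transposition of \<open>p\<close> and \<open>q\<close> maps the permutations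
  onto themselves, exchanges the positions of \<open>p\<close> and \<open>q\<close> and changes each such product in
  at most one factor, by at most \<open>|c q - c p| \<le> \<eta> L\<close>. Hence all \<open>W q\<close> lie within \<open>n! \<eta> L\<close> of
  each other, and since the \<open>b q\<close> sum to zero the expectation is bounded by \<open>\<eta> n G L\<close>.
\<close>

lemma abs_prod_transpose_diff_le:
  fixes c :: "'a \<Rightarrow> 'b::linordered_idom"
  assumes "finite K" "q \<notin> K" "\<And>k. k \<in> K \<Longrightarrow> 0 \<le> c k \<and> c k \<le> 1"
  shows "\<bar>(\<Prod>k\<in>K. c (Transposition.transpose p q k)) - (\<Prod>k\<in>K. c k)\<bar> \<le> \<bar>c q - c p\<bar>"
proof (cases "p \<in> K")
  case True
  define R where "R = (\<Prod>k\<in>K - {p}. c k)"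
  have R: "0 \<le> R" "R \<le> 1"
    using assms(3) by (auto simp: R_def intro!: prod_nonneg prod_le_1)
  have "Transposition.transpose p q k = k" if "k \<in> K - {p}" for k
    using assms(2) that by (intro transpose_apply_other) auto
  then have "(\<Prod>k\<in>K. c (Transposition.transpose p q k)) = c q * R"
    by (simp add: prod.remove[OF assms(1) True] R_def)
  moreover have "(\<Prod>k\<in>K. c k) = c p * R"
    by (simp add: prod.remove[OF assms(1) True] R_def)
  ultimately show ?thesis
    using R by (simp add: left_diff_distrib[symmetric] abs_mult mult_left_le)
next
  case False
  have "Transposition.transpose p q k = k" if "k \<in> K" for k
    using False assms(2) that by (intro transpose_apply_other) auto
  then show ?thesis by simp
qed

lemma sum_permutes_inv_transpose:
  assumes "p \<in> S" "q \<in> S"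
  shows "(\<Sum>\<sigma>\<in>{\<sigma>. \<sigma> permutes S}. h \<sigma> (inv \<sigma> p))
       = (\<Sum>\<sigma>\<in>{\<sigma>. \<sigma> permutes S}. h (Transposition.transpose p q \<circ> \<sigma>) (inv \<sigma> q))"
proof -
  let ?\<tau> = "Transposition.transpose p q"
  have \<tau>: "?\<tau> permutes S" using assms by (simp add: permutes_swap_id)
  have inv: "inv (?\<tau> \<circ> \<sigma>) q = inv \<sigma> p" if "\<sigma> permutes S" for \<sigma>
    using permutes_inv_eq[OF permutes_compose[OF that \<tau>]] permutes_inverses(1)[OF that]
    by simp
  show ?thesis
    by (rule sum.reindex_bij_witness[of _ "\<lambda>\<sigma>. ?\<tau> \<circ> \<sigma>" "\<lambda>\<sigma>. ?\<tau> \<circ> \<sigma>"])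
       (auto simp: inv comp_assoc[symmetric] intro: permutes_compose[OF _ \<tau>])
qed

lemma abs_sum_mult_le_of_sum_eq_0:
  fixes b W :: "'a \<Rightarrow> real"
  assumes "sum b S = 0" "p \<in> S"
    and "\<And>q. q \<in> S \<Longrightarrow> \<bar>b q\<bar> \<le> G" "\<And>q. q \<in> S \<Longrightarrow> \<bar>W q - W p\<bar> \<le> D"
  shows "\<bar>\<Sum>q\<in>S. b q * W q\<bar> \<le> real (card S) * G * D"
proof -
  have "(\<Sum>q\<in>S. b q * W q) = (\<Sum>q\<in>S. b q * (W q - W p))"
    using assms(1) by (simp add: right_diff_distrib sum_subtractf sum_distrib_right[symmetric])
  also have "\<bar>\<dots>\<bar> \<le> (\<Sum>q\<in>S. G * D)"
    using assms(3,4) by (intro order_trans[OF sum_abs] sum_mono)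
      (simp add: abs_mult mult_mono' order_trans[OF abs_ge_zero])
  finally show ?thesis by simp
qed

definition position_weight :: "nat \<Rightarrow> (nat \<Rightarrow> real) \<Rightarrow> nat \<Rightarrow> real" where
  "position_weight n c q = (\<Sum>\<sigma>\<in>{\<sigma>. \<sigma> permutes {1..n}}. \<Prod>i=inv \<sigma> q+1..n. c (\<sigma> i))"

lemma sum_X_perm_eq:
  "(\<Sum>\<sigma>\<in>{\<sigma>. \<sigma> permutes {1..n}}. X_perm n \<eta> a b \<sigma>)
     = (\<Sum>q=1..n. b q * position_weight n (\<lambda>i. 1 - \<eta> * a i) q)"
proof -
  let ?P = "{\<sigma>. \<sigma> permutes {1..n}}" and ?F = "\<lambda>\<sigma> j. \<Prod>i=j+1..n. 1 - \<eta> * a (\<sigma> i)"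
  have "(\<Sum>\<sigma>\<in>?P. X_perm n \<eta> a b \<sigma>) = (\<Sum>\<sigma>\<in>?P. \<Sum>q=1..n. ?F \<sigma> (inv \<sigma> q) * b q)"
  proof (rule sum.cong)
    fix \<sigma> assume "\<sigma> \<in> ?P"
    then show "X_perm n \<eta> a b \<sigma> = (\<Sum>q=1..n. ?F \<sigma> (inv \<sigma> q) * b q)"
      using sum.permutes_inv[of \<sigma> "{1..n}" "\<lambda>u j. ?F \<sigma> j * b u"] by (simp add: X_perm_def)
  qed simp
  also have "\<dots> = (\<Sum>q=1..n. \<Sum>\<sigma>\<in>?P. ?F \<sigma> (inv \<sigma> q) * b q)"
    by (rule sum.swap)
  finally show ?thesis
    by (simp add: position_weight_def sum_distrib_left mult.commute)
qed

lemma position_weight_diff_le: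
  assumes "p \<in> {1..n}" "q \<in> {1..n}" "\<And>i. i \<in> {1..n} \<Longrightarrow> 0 \<le> c i \<and> c i \<le> 1"
  shows "\<bar>position_weight n c q - position_weight n c p\<bar>
           \<le> real (card {\<sigma>. \<sigma> permutes {1..n}}) * \<bar>c q - c p\<bar>"
proof -
  let ?P = "{\<sigma>. \<sigma> permutes {1..n}}" and ?\<tau> = "Transposition.transpose p q"
  let ?w = "\<lambda>\<sigma>. \<Prod>i=inv \<sigma> q+1..n. c (\<sigma> i)" and ?w' = "\<lambda>\<sigma>. \<Prod>i=inv \<sigma> q+1..n. c (?\<tau> (\<sigma> i))"
  have tail_diff: "\<bar>?w \<sigma> - ?w' \<sigma>\<bar> \<le> \<bar>c q - c p\<bar>" if "\<sigma> \<in> ?P" for \<sigma>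
  proof -
    from that have \<sigma>: "\<sigma> permutes {1..n}" by simp
    let ?J = "{inv \<sigma> q+1..n}"
    have inj: "inj_on \<sigma> ?J" using \<sigma> by (rule permutes_inj_on)
    have "q \<notin> \<sigma> ` ?J"
    proof
      assume "q \<in> \<sigma> ` ?J"
      then obtain i where "i \<in> ?J" "q = \<sigma> i" by blast
      then show False using permutes_inverses(2)[OF \<sigma>, of i] by simp
    qed
    moreover have "\<sigma> ` ?J \<subseteq> {1..n}"
      using image_mono[of ?J "{1..n}" \<sigma>] permutes_image[OF \<sigma>] by simp
    ultimately have "\<bar>(\<Prod>k\<in>\<sigma> ` ?J. c (?\<tau> k)) - (\<Prod>k\<in>\<sigma> ` ?J. c k)\<bar> \<le> \<bar>c q - c p\<bar>"
      using assms(3) by (intro abs_prod_transpose_diff_le) auto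
    moreover have "(\<Prod>k\<in>\<sigma> ` ?J. c (?\<tau> k)) = ?w' \<sigma>" "(\<Prod>k\<in>\<sigma> ` ?J. c k) = ?w \<sigma>"
      by (simp_all only: prod.reindex[OF inj] comp_def)
    ultimately show ?thesis by (simp add: abs_minus_commute)
  qed
  have "position_weight n c q - position_weight n c p = (\<Sum>\<sigma>\<in>?P. ?w \<sigma> - ?w' \<sigma>)"
    unfolding position_weight_def
      sum_permutes_inv_transpose[OF assms(1,2), of "\<lambda>\<sigma> j. \<Prod>i=j+1..n. c (\<sigma> i)"]
    by (simp add: sum_subtractf)
  also have "\<bar>\<dots>\<bar> \<le> (\<Sum>\<sigma>\<in>?P. \<bar>c q - c p\<bar>)"
    by (rule order_trans[OF sum_abs sum_mono]) (rule tail_diff)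
  finally show ?thesis by simp
qed

lemma abs_sum_X_perm_le:
  assumes "n \<ge> 1" "\<eta> \<ge> 0" "\<eta> * L \<le> 1"
    and "\<And>i. i \<in> {1..n} \<Longrightarrow> 0 \<le> a i \<and> a i \<le> L"
    and "\<And>i. i \<in> {1..n} \<Longrightarrow> \<bar>b i\<bar> \<le> G"
    and "(\<Sum>i=1..n. b i) = 0"
  shows "\<bar>\<Sum>\<sigma>\<in>{\<sigma>. \<sigma> permutes {1..n}}. X_perm n \<eta> a b \<sigma>\<bar>
           \<le> real (card {\<sigma>. \<sigma> permutes {1..n}}) * (\<eta> * real n * G * L)"
proof -
  let ?P = "{\<sigma>. \<sigma> permutes {1..n}}" and ?c = "\<lambda>i. 1 - \<eta> * a i"
  have one: "1 \<in> {1..n}" using assms(1) by simp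
  have \<eta>a: "0 \<le> \<eta> * a i \<and> \<eta> * a i \<le> \<eta> * L" if "i \<in> {1..n}" for i
    using assms(2) assms(4)[OF that] by (simp add: mult_left_mono)
  have weight_diff:
    "\<bar>position_weight n ?c q - position_weight n ?c 1\<bar> \<le> real (card ?P) * (\<eta> * L)"
    if "q \<in> {1..n}" for q
  proof -
    have "\<bar>?c q - ?c 1\<bar> \<le> \<eta> * L"
      using \<eta>a[OF that] \<eta>a[OF one] by (simp add: abs_le_iff)
    moreover have "0 \<le> ?c i \<and> ?c i \<le> 1" if "i \<in> {1..n}" for i
      using \<eta>a[OF that] assms(3) by simp
    ultimately show ?thesis
      using position_weight_diff_le[OF one that, of ?c]
      by (meson mult_left_mono of_nat_0_le_iff order_trans)
  qed
  show ?thesis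
    unfolding sum_X_perm_eq
    using abs_sum_mult_le_of_sum_eq_0[where W = "position_weight n ?c", OF assms(6) one assms(5) weight_diff]
    by (simp add: mult_ac)
qed

theorem lemma8:
  fixes n :: nat and L G \<eta> :: real and a b :: "nat \<Rightarrow> real"
  assumes "n \<ge> 1" and "L > 0" and "G > 0" and "\<eta> > 0"
    and "\<eta> * real n * L \<le> 1/2"
    and "\<And>i. i \<in> {1..n} \<Longrightarrow> 0 \<le> a i \<and> a i \<le> L"
    and "\<And>i. i \<in> {1..n} \<Longrightarrow> -G \<le> b i \<and> b i \<le> G"
    and "(\<Sum>i=1..n. b i) = 0"
  shows "\<bar>expect_perm n (X_perm n \<eta> a b)\<bar> \<le> 2 * \<eta> * real n * G * L"
proof -
  let ?P = "{\<sigma>. \<sigma> permutes {1..n}}"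
  have "\<eta> * L * 1 \<le> \<eta> * L * real n"
    using assms(1,2,4) by (intro mult_left_mono) auto
  then have "\<eta> * L \<le> 1" using assms(5) by (simp add: mult_ac)
  moreover have "\<bar>b i\<bar> \<le> G" if "i \<in> {1..n}" for i
    using assms(7)[OF that] by (simp add: abs_le_iff)
  ultimately have "\<bar>\<Sum>\<sigma>\<in>?P. X_perm n \<eta> a b \<sigma>\<bar> \<le> real (card ?P) * (\<eta> * real n * G * L)"
    using assms(1,4,6,8) by (intro abs_sum_X_perm_le) auto
  moreover have "card ?P > 0"
    by (simp add: card_permutations[OF refl])
  ultimately have "\<bar>expect_perm n (X_perm n \<eta> a b)\<bar> \<le> \<eta> * real n * G * L"
    by (simp add: expect_perm_def divide_le_eq mult.commute)
  also have "\<dots> \<le> 2 * \<eta> * real n * G * L"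
    using assms(2,3,4) by simp
  finally show ?thesis .
qed

end
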